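(* Let $\lambda<\kappa$ be infinite cardinals with $\mathrm{cf}(\lambda)>\omega$ and $\mathrm{cf}(\kappa)\ne\mathrm{cf}(\lambda)$. Then every $(\lambda,\kappa)$-graph contains a $(\lambda',\kappa)$-subgraph for some cardinal $\lambda'<\lambda$.
   Context: For infinite cardinals $\lambda<\kappa$, a $(\lambda,\kappa)$-graph is a bipartite graph with bipartition $(A,B)$, $|A|=\lambda$, $|B|=\kappa$, in which every vertex $b\in B$ has infinitely many neighbours in $A$. A $(\lambda',\kappa)$-subgraph of such a graph is a subgraph with bipartition $(C,D)$, $C\subseteq A$, $D\subseteq B$, which is itself a $(\lambda',\kappa)$-graph. *)

theory Defs
  imports Main "HOL-Library.Countable_Set"
begin

text \<open>Cardinals are represented by sets, compared via the canonical cardinal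
  well-orders card_of (Main, BNF_Cardinal_Order_Relation).\<close>

definition cofinal_in :: "'a rel \<Rightarrow> 'a set \<Rightarrow> bool" where
  "cofinal_in r X \<longleftrightarrow> X \<subseteq> Field r \<and> (\<forall>a\<in>Field r. \<exists>b\<in>X. (a, b) \<in> r)"

text \<open>X witnesses the cofinality of r: X is cofinal in r and of minimal cardinality
  among cofinal subsets; cf(r) is then the cardinality of X.\<close>
definition cf_witness :: "'a rel \<Rightarrow> 'a set \<Rightarrow> bool" where
  "cf_witness r X \<longleftrightarrow> cofinal_in r X \<and>
     (\<forall>Y. cofinal_in r Y \<longrightarrow> ordLeq3 (card_of X) (card_of Y))"

text \<open>Bipartite graph with sides A, B and edge relation E (a adjacent to b iff E a b):
  it is a (|A|,|B|)-graph if A, B are infinite and every b in B has infinitely many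
  neighbours in A.\<close>
definition lk_graph :: "'a set \<Rightarrow> 'b set \<Rightarrow> ('a \<Rightarrow> 'b \<Rightarrow> bool) \<Rightarrow> bool" where
  "lk_graph A B E \<longleftrightarrow> infinite A \<and> infinite B \<and>
     (\<forall>b\<in>B. infinite {a\<in>A. E a b})"

end

(*
  For every b in B the neighbourhood of b contains a countably infinite set, which is
  bounded in the well-order of A because cf(lambda) > omega; let f(b) be such a bound.
  Along a cofinal subset X of A of size cf(lambda), the sets B_x = {b. f(b) <= x}
  form an increasing chain with union B. Since cf(lambda) <> cf(kappa), the union of
  such a chain of sets of size < kappa has size < kappa; hence some B_x has size kappa,
  and the fewer than lambda vertices of A below x together with B_x form the subgraph.
*)

theory Submission
  imports Defs "HOL-Library.Countable_Set_Type"
begin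

unbundle cardinal_syntax

lemma finite_card_of_ordLess_infinite: "finite S \<Longrightarrow> infinite K \<Longrightarrow> |S| <o |K|"
  by (rule finite_ordLess_infinite)
    (auto simp: card_of_Well_order Field_card_of card_of_well_order_on)

lemma card_of_UNION_ordLess_uniform_bound:
  assumes K: "infinite K" and I: "|I| <o |K|" and T: "|T| <o |K|"
    and S: "\<forall>i\<in>I. |S i| \<le>o |T|"
  shows "|\<Union>i\<in>I. S i| <o |K|"
proof (cases "finite I \<and> finite T")
  case True
  then have "finite (\<Union>i\<in>I. S i)" using S card_of_ordLeq_finite by blast
  then show ?thesis using K finite_card_of_ordLess_infinite by blast
next
  case False
  then have "infinite (I <+> T)" by auto
  moreover have "\<forall>i\<in>I. |S i| \<le>o |I <+> T|" using S card_of_Plus2 ordLeq_transitive by blast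
  ultimately have "|\<Union>i\<in>I. S i| \<le>o |I <+> T|"
    using card_of_UNION_ordLeq_infinite card_of_Plus1 by fast
  then show ?thesis using card_of_Plus_ordLess_infinite[OF K I T] ordLeq_ordLess_trans by blast
qed

lemma card_of_total: "a \<in> A \<Longrightarrow> b \<in> A \<Longrightarrow> (a, b) \<in> |A| \<or> (b, a) \<in> |A|"
  using wo_rel.TOTALS[of "|A|"] card_of_Well_order unfolding wo_rel_def Field_card_of by blast

lemma card_of_trans: "trans |A|"
  using card_of_Well_order unfolding order_on_defs by blast

lemma under_card_of_subset: "under (card_of A) a \<subseteq> A"
  using under_Field[of "|A|"] by (simp add: Field_card_of)

lemma card_of_under_ordLess:
  assumes "infinite A" and "a \<in> A"
  shows "|under (card_of A) a| <o |A|"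
proof -
  have under: "under (card_of A) a = underS (card_of A) a \<union> {a}"
    using Refl_under_underS[of "|A|" a] card_of_Well_order[of A] assms(2)
    unfolding order_on_defs by (simp add: Field_card_of)
  have "|underS (card_of A) a| <o |A|"
    using card_of_underS[OF card_of_Card_order] assms(2) by (simp add: Field_card_of)
  moreover have "|{a}| <o |A|"
    using finite_card_of_ordLess_infinite assms(1) by blast
  ultimately show ?thesis
    unfolding under by (rule card_of_Un_ordLess_infinite[OF assms(1)])
qed

lemma ordLess_imp_ordLeq_card_of_underS:
  assumes "Card_order r" "|S| <o r"
  shows "\<exists>a\<in>Field r. |S| \<le>o |underS r a|"
proof -
  have wo: "Well_order r" using assms(1) unfolding card_order_on_def by simp
  obtain a where a: "a \<in> Field r" "|S| =o Restr r (underS r a)"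
    using ordLess_iff_ordIso_Restr[OF wo card_of_Well_order] assms(2) by blast
  have "Field (Restr r (underS r a)) = underS r a"
    using wo wo_rel.underS_ofilter Field_Restr_ofilter unfolding wo_rel_def by fastforce
  moreover have "Card_order (Restr r (underS r a))"
    using a(2) card_of_Card_order Card_order_ordIso2 by blast
  ultimately have "|underS r a| =o Restr r (underS r a)"
    using card_of_Field_ordIso by fastforce
  then have "|S| =o |underS r a|" using a(2) ordIso_symmetric ordIso_transitive by blast
  then show ?thesis using a(1) ordIso_iff_ordLeq by blast
qed

lemma ordLess_imp_ordLeq_card_of_under:
  assumes "|S| <o |A|"
  shows "\<exists>a\<in>A. |S| \<le>o |under (card_of A) a|"
  using ordLess_imp_ordLeq_card_of_underS[OF card_of_Card_order assms]
    card_of_mono1[OF underS_subset_under] ordLeq_transitive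
  by (fastforce simp: Field_card_of)

lemma cf_witness_exists: "\<exists>X. cf_witness (card_of S) X"
proof -
  let ?R = "card_of ` {Y. cofinal_in (card_of S) Y}"
  have "cofinal_in (card_of S) S"
    using card_of_Well_order[of S]
    unfolding cofinal_in_def order_on_defs refl_on_def by (auto simp: Field_card_of)
  then have "?R \<noteq> {}" by blast
  then obtain r where r: "r \<in> ?R" "\<forall>r'\<in>?R. r \<le>o r'"
    using exists_minim_Card_order[of ?R] card_of_Card_order by blast
  then obtain X where "cofinal_in (card_of S) X" "r = |X|" by blast
  with r(2) show ?thesis unfolding cf_witness_def by blast
qed

lemma cf_witness_subset: "cf_witness (card_of S) X \<Longrightarrow> X \<subseteq> S"
  unfolding cf_witness_def cofinal_in_def by (simp add: Field_card_of)

lemma cf_witness_cofinal: "cf_witness (card_of S) X \<Longrightarrow> a \<in> S \<Longrightarrow> \<exists>b\<in>X. (a, b) \<in> |S|"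
  unfolding cf_witness_def cofinal_in_def by (simp add: Field_card_of)

lemma UN_under_cf_witness:
  assumes "cf_witness (card_of S) X"
  shows "S = (\<Union>x\<in>X. under (card_of S) x)"
proof
  show "S \<subseteq> (\<Union>x\<in>X. under (card_of S) x)"
  proof
    fix a assume "a \<in> S"
    then obtain x where "x \<in> X" "(a, x) \<in> |S|" using cf_witness_cofinal[OF assms] by blast
    then show "a \<in> (\<Union>x\<in>X. under (card_of S) x)" by (auto simp: under_def)
  qed
  show "(\<Union>x\<in>X. under (card_of S) x) \<subseteq> S" by (rule UN_least, rule under_card_of_subset)
qed

lemma bounded_if_ordLess_cf_witness:
  assumes X: "cf_witness (card_of A) X" and G: "G \<subseteq> A" "|G| <o |X|"
  shows "\<exists>a\<in>A. G \<subseteq> under (card_of A) a"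
proof (rule ccontr)
  assume unbounded: "\<not> ?thesis"
  have "cofinal_in (card_of A) G"
    unfolding cofinal_in_def Field_card_of
  proof (intro conjI ballI)
    fix a assume a: "a \<in> A"
    then obtain g where g: "g \<in> G" "(g, a) \<notin> |A|"
      using unbounded by (auto simp: under_def subset_iff)
    then have "(a, g) \<in> |A|" using card_of_total[of a A g] a G(1) by auto
    with g(1) show "\<exists>g\<in>G. (a, g) \<in> |A|" ..
  qed (fact G(1))
  then have "|X| \<le>o |G|" using X unfolding cf_witness_def by simp
  then show False using G(2) not_ordLess_ordLeq by auto
qed

lemma infinite_Int_under_if_cf_uncountable:
  assumes X: "cf_witness (card_of A) X" "\<not> countable X" and S: "S \<subseteq> A" "infinite S"
  shows "\<exists>a\<in>A. infinite (S \<inter> under (card_of A) a)"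
proof -
  obtain g :: "nat \<Rightarrow> 'a" where g: "inj g" "range g \<subseteq> S"
    using infinite_countable_subset[OF S(2)] by auto
  have "|range g| \<le>o |UNIV :: nat set|"
    using countable_card_of_nat by blast
  then have "\<not> |X| \<le>o |range g|"
    using X(2) countable_card_of_nat ordLeq_transitive by blast
  then have "|range g| <o |X|"
    using not_ordLeq_iff_ordLess[OF card_of_Well_order card_of_Well_order] by auto
  moreover have "range g \<subseteq> A" using g(2) S(1) by (rule subset_trans)
  ultimately obtain a where a: "a \<in> A" "range g \<subseteq> under (card_of A) a"
    using bounded_if_ordLess_cf_witness[OF X(1)] by metis
  have "range g \<subseteq> S \<inter> under (card_of A) a" using g(2) a(2) by (rule Int_greatest)
  moreover have "infinite (range g)" using g(1) by (rule range_inj_infinite)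
  ultimately show ?thesis using a(1) infinite_super by metis
qed

lemma lk_graph_neighbourhoods_bounded:
  assumes "lk_graph A B E" and "cf_witness (card_of A) X" "\<not> countable X"
  shows "\<exists>f. \<forall>b\<in>B. f b \<in> A \<and> infinite ({a\<in>A. E a b} \<inter> under (card_of A) (f b))"
proof -
  have "\<forall>b\<in>B. \<exists>a\<in>A. infinite ({a'\<in>A. E a' b} \<inter> under (card_of A) a)"
    using assms(1) infinite_Int_under_if_cf_uncountable[OF assms(2,3)]
    unfolding lk_graph_def by auto
  then show ?thesis by metis
qed

lemma card_of_UNION_ordLess_below_cf:
  assumes B: "infinite B" and Y: "cf_witness (card_of B) Y" and I: "|I| <o |Y|"
    and small: "\<forall>i\<in>I. |F i| <o |B|"
  shows "|\<Union>i\<in>I. F i| <o |B|"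
proof -
  have "\<forall>i\<in>I. \<exists>b\<in>B. |F i| \<le>o |under (card_of B) b|"
    using small by (auto intro: ordLess_imp_ordLeq_card_of_under)
  then obtain y where y: "\<forall>i\<in>I. y i \<in> B \<and> |F i| \<le>o |under (card_of B) (y i)|" by metis
  have "|y ` I| <o |Y|" using card_of_image I by (rule ordLeq_ordLess_trans)
  moreover have "y ` I \<subseteq> B" using y by auto
  ultimately obtain b where b: "b \<in> B" "y ` I \<subseteq> under (card_of B) b"
    using bounded_if_ordLess_cf_witness[OF Y] by metis
  have "\<forall>i\<in>I. |F i| \<le>o |under (card_of B) b|"
  proof
    fix i assume i: "i \<in> I"
    have "(y i, b) \<in> |B|" using b(2) i unfolding under_def by auto
    then have "under (card_of B) (y i) \<subseteq> under (card_of B) b"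
      by (rule under_incr[OF card_of_trans])
    then show "|F i| \<le>o |under (card_of B) b|"
      using y i card_of_mono1 ordLeq_transitive by metis
  qed
  moreover have "|I| <o |B|"
    using I card_of_mono1[OF cf_witness_subset[OF Y]] by (rule ordLess_ordLeq_trans)
  moreover have "|under (card_of B) b| <o |B|" using B b(1) by (rule card_of_under_ordLess)
  ultimately show ?thesis using card_of_UNION_ordLess_uniform_bound[OF B] by metis
qed

lemma card_of_UNION_chain_ordLess_above_cf:
  assumes B: "infinite B" and X: "cf_witness (card_of A) X" and Y: "cf_witness (card_of B) Y"
    and YX: "|Y| <o |X|" and XB: "|X| <o |B|" and chain: "relChain (card_of A) F"
    and small: "\<forall>x\<in>X. |F x| <o |B|"
  shows "|\<Union>x\<in>X. F x| <o |B|"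
proof (cases "\<exists>y\<in>Y. \<forall>x\<in>X. |F x| \<le>o |under (card_of B) y|")
  case True
  then obtain y where y: "y \<in> Y" "\<forall>x\<in>X. |F x| \<le>o |under (card_of B) y|" by metis
  have "|under (card_of B) y| <o |B|"
    using B cf_witness_subset[OF Y] y(1) card_of_under_ordLess by (metis subsetD)
  then show ?thesis using card_of_UNION_ordLess_uniform_bound[OF B XB] y(2) by metis
next
  case False
  \<comment> \<open>Each initial segment of B ending in Y is then dominated by some F x. Fewer than
    cf(A) indices x occur, so a single F x0 dominates all these segments, and their union B
    would be small.\<close>
  then have "\<forall>y\<in>Y. \<exists>x\<in>X. |under (card_of B) y| \<le>o |F x|"
    using not_ordLeq_iff_ordLess[OF card_of_Well_order card_of_Well_order] ordLess_imp_ordLeq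
    by metis
  then obtain x where x: "\<forall>y\<in>Y. x y \<in> X \<and> |under (card_of B) y| \<le>o |F (x y)|" by metis
  have "|x ` Y| <o |X|" using card_of_image YX by (rule ordLeq_ordLess_trans)
  moreover have "x ` Y \<subseteq> A" using x cf_witness_subset[OF X] by auto
  ultimately obtain a where a: "a \<in> A" "x ` Y \<subseteq> under (card_of A) a"
    using bounded_if_ordLess_cf_witness[OF X] by metis
  then obtain x0 where x0: "x0 \<in> X" "(a, x0) \<in> |A|" using cf_witness_cofinal[OF X] by metis
  have "\<forall>y\<in>Y. |under (card_of B) y| \<le>o |F x0|"
  proof
    fix y assume y: "y \<in> Y"
    have "(x y, a) \<in> |A|" using a(2) y unfolding under_def by auto
    then have "(x y, x0) \<in> |A|" using x0(2) card_of_trans unfolding trans_def by metis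
    then have "F (x y) \<subseteq> F x0" using chain unfolding relChain_def by auto
    then show "|under (card_of B) y| \<le>o |F x0|"
      using x y card_of_mono1 ordLeq_transitive by metis
  qed
  moreover have "|Y| <o |B|" using YX XB by (rule ordLess_transitive)
  moreover have "|F x0| <o |B|" using small x0(1) by auto
  ultimately have "|\<Union>y\<in>Y. under (card_of B) y| <o |B|"
    using card_of_UNION_ordLess_uniform_bound[OF B] by metis
  then have False using UN_under_cf_witness[OF Y] ordLess_irreflexive by metis
  then show ?thesis ..
qed

lemma card_of_UNION_chain_ordLess:
  assumes B: "infinite B" and X: "cf_witness (card_of A) X" and Y: "cf_witness (card_of B) Y"
    and cf_ne: "\<not> |X| =o |Y|" and XB: "|X| <o |B|" and chain: "relChain (card_of A) F"
    and small: "\<forall>x\<in>X. |F x| <o |B|"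
  shows "|\<Union>x\<in>X. F x| <o |B|"
proof -
  have "|X| <o |Y| \<or> |Y| <o |X|"
    using ordLess_or_ordLeq[OF card_of_Well_order card_of_Well_order] cf_ne
      ordLeq_iff_ordLess_or_ordIso ordIso_symmetric by metis
  then show ?thesis
    using card_of_UNION_ordLess_below_cf[OF B Y _ small]
      card_of_UNION_chain_ordLess_above_cf[OF B X Y _ XB chain small] by metis
qed

lemma lk_graphI:
  assumes "infinite D" and "\<forall>b\<in>D. infinite {a\<in>C. E a b}"
  shows "lk_graph C D E"
proof -
  obtain b where "b \<in> D" using assms(1) by (metis ex_in_conv finite.emptyI)
  then have "infinite C" using assms(2) Collect_restrict infinite_super by metis
  with assms show ?thesis unfolding lk_graph_def by simp
qed

lemma lk_graph_under:
  assumes "infinite D" and "\<forall>b\<in>D. infinite ({a\<in>A. E a b} \<inter> under (card_of A) (f b))"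
    and "\<forall>b\<in>D. (f b, x) \<in> |A|"
  shows "lk_graph (under (card_of A) x) D E"
proof (rule lk_graphI)
  show "\<forall>b\<in>D. infinite {a\<in>under (card_of A) x. E a b}"
  proof
    fix b assume b: "b \<in> D"
    have "under (card_of A) (f b) \<subseteq> under (card_of A) x"
      using assms(3) b by (metis under_incr card_of_trans)
    then have "{a\<in>A. E a b} \<inter> under (card_of A) (f b) \<subseteq> {a\<in>under (card_of A) x. E a b}"
      by auto
    then show "infinite {a\<in>under (card_of A) x. E a b}" using assms(2) b infinite_super by metis
  qed
qed (fact assms(1))

theorem lemma4p1:
  fixes A :: "'a set" and B :: "'b set" and E :: "'a \<Rightarrow> 'b \<Rightarrow> bool"
  assumes graph: "lk_graph A B E"
    and less: "ordLess2 (card_of A) (card_of B)"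
    and cf_unc: "\<And>X. cf_witness (card_of A) X \<Longrightarrow> \<not> countable X"
    and cf_ne: "\<And>X Y. cf_witness (card_of A) X \<Longrightarrow> cf_witness (card_of B) Y \<Longrightarrow>
                   \<not> ordIso2 (card_of X) (card_of Y)"
  shows "\<exists>C D. C \<subseteq> A \<and> D \<subseteq> B \<and> ordLess2 (card_of C) (card_of A) \<and>
            ordIso2 (card_of D) (card_of B) \<and> lk_graph C D E"
proof -
  obtain X Y where X: "cf_witness (card_of A) X" and Y: "cf_witness (card_of B) Y"
    using cf_witness_exists by metis
  have infA: "infinite A" and infB: "infinite B" using graph unfolding lk_graph_def by auto
  obtain f where f: "\<forall>b\<in>B. f b \<in> A \<and> infinite ({a\<in>A. E a b} \<inter> under (card_of A) (f b))"
    using lk_graph_neighbourhoods_bounded[OF graph X cf_unc[OF X]] by blast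
  define F where "F x = {b\<in>B. (f b, x) \<in> |A|}" for x
  have "relChain (card_of A) F"
    using card_of_trans[of A] unfolding relChain_def F_def trans_def by auto
  moreover have "B = (\<Union>x\<in>X. F x)"
    using f cf_witness_cofinal[OF X] unfolding F_def by auto
  moreover have "|X| <o |B|"
    using card_of_mono1[OF cf_witness_subset[OF X]] less by (rule ordLeq_ordLess_trans)
  ultimately obtain x where x: "x \<in> X" "\<not> |F x| <o |B|"
    using card_of_UNION_chain_ordLess[OF infB X Y cf_ne[OF X Y]] ordLess_irreflexive by metis
  then have Fx: "|F x| =o |B|"
    using card_of_mono1[of "F x" B] ordLeq_iff_ordLess_or_ordIso unfolding F_def by auto
  have "infinite (F x)" using card_of_ordIso_finite[OF Fx] infB by auto
  then have "lk_graph (under (card_of A) x) (F x) E"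
    by (rule lk_graph_under) (use f in \<open>auto simp: F_def\<close>)
  moreover have "|under (card_of A) x| <o |A|"
    using infA cf_witness_subset[OF X] x(1) by (intro card_of_under_ordLess) auto
  moreover have "under (card_of A) x \<subseteq> A" "F x \<subseteq> B"
    unfolding F_def by (auto simp: under_card_of_subset)
  ultimately show ?thesis using Fx by auto
qed

end
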